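(* Let $W,V$ be subspaces of $\mathbb{C}^n$ with $\mathbb{C}^n=W\oplus V^\perp$, let $\{\mathbf{w}_i\}_{i=1}^N$ be a frame for $W$ with frame operator $\mathbf{S}=\sum_{i=1}^N\mathbf{w}_i\mathbf{w}_i^*$, and let $\{\mathbf{v}_i\}_{i=1}^N$ be an oblique dual frame of $\{\mathbf{w}_i\}_{i=1}^N$ on $V$. Let $p=2k$ where $k\ge1$, and let $d_W=\dim W$. Then $$\sum_{i=1}^N|\langle\mathbf{w}_i,\mathbf{v}_i\rangle|^p\ge N^{1-p}d_W^p\quad\text{and}\quad\sum_{i=1}^N\sum_{j=1}^N|\langle\mathbf{w}_i,\mathbf{v}_j\rangle|^p\ge N^{2-p}d_W^{p/2}.$$ Furthermore, when $k>1$, the first inequality is an equality if and only if $\langle\mathbf{w}_i,\mathbf{v}_i\rangle=\frac{d_W}{N}$ for all $i$, and the second inequality is an equality if and only if $|\langle\mathbf{w}_i,\mathbf{v}_j\rangle|$ is constant over all $i$ and $j$ and $\mathbf{v}_j=\boldsymbol{\pi}_{VW^\perp}\mathbf{S}^\dagger\mathbf{w}_j$ for each $j$.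
   Context: The inner product on $\mathbb{C}^n$ is $\langle\mathbf{x},\mathbf{y}\rangle=\mathbf{y}^*\mathbf{x}$. $\mathbf{S}^\dagger$ is the Moore–Penrose inverse. When $\mathbb{C}^n=W\oplus V^\perp$ (equivalently $\mathbb{C}^n=V\oplus W^\perp$), $\boldsymbol{\pi}_{WV^\perp}$ is the oblique projection onto $W$ along $V^\perp$ and $\boldsymbol{\pi}_{VW^\perp}$ the oblique projection onto $V$ along $W^\perp$. A finite family in $W$ is a frame for $W$ if it spans $W$. A frame $\{\mathbf{v}_i\}_{i=1}^N\subset V$ for $V$ is an oblique dual frame of $\{\mathbf{w}_i\}$ on $V$ if $\boldsymbol{\pi}_{WV^\perp}\mathbf{f}=\sum_{i=1}^N\langle\mathbf{f},\mathbf{v}_i\rangle\mathbf{w}_i$ for all $\mathbf{f}\in\mathbb{C}^n$. *)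

theory Defs
  imports "HOL-Analysis.Analysis"
begin

text \<open>Vectors of C^n are modelled as complex ^ 'n; complex-linear notions use the
  library interpretation vec (scalar multiplication *s): vec.subspace, vec.span, vec.dim.\<close>

definition cinner :: "complex^'n \<Rightarrow> complex^'n \<Rightarrow> complex" where
  "cinner x y = (\<Sum>i\<in>UNIV. x$i * cnj (y$i))"   \<comment> \<open>\<langle>x,y\<rangle> = y^* x\<close>

definition corth :: "(complex^'n) set \<Rightarrow> (complex^'n) set" where
  "corth V = {x. \<forall>v\<in>V. cinner x v = 0}"

definition direct_sum_UNIV :: "(complex^'n) set \<Rightarrow> (complex^'n) set \<Rightarrow> bool" where
  "direct_sum_UNIV A B \<longleftrightarrow> A \<inter> B = {0} \<and> (\<forall>f. \<exists>a\<in>A. \<exists>b\<in>B. f = a + b)"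

text \<open>Oblique projection onto A along B (when the whole space is A \<oplus> B).\<close>
definition oblique_proj :: "(complex^'n) set \<Rightarrow> (complex^'n) set \<Rightarrow> complex^'n \<Rightarrow> complex^'n" where
  "oblique_proj A B f = (THE a. a \<in> A \<and> f - a \<in> B)"

definition outer :: "complex^'n \<Rightarrow> complex^'n \<Rightarrow> complex^'n^'n" where
  "outer x y = (\<chi> r c. x$r * cnj (y$c))"

definition cadj :: "complex^'n^'m \<Rightarrow> complex^'m^'n" where
  "cadj A = (\<chi> i j. cnj (A$j$i))"

definition mp_inverse :: "complex^'n^'m \<Rightarrow> complex^'m^'n" where
  "mp_inverse A = (THE X. A ** X ** A = A \<and> X ** A ** X = X \<and>
      cadj (A ** X) = A ** X \<and> cadj (X ** A) = X ** A)"

definition frame_op :: "nat \<Rightarrow> (nat \<Rightarrow> complex^'n) \<Rightarrow> complex^'n^'n" where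
  "frame_op N w = (\<Sum>i<N. outer (w i) (w i))"

definition is_frame :: "nat \<Rightarrow> (nat \<Rightarrow> complex^'n) \<Rightarrow> (complex^'n) set \<Rightarrow> bool" where
  "is_frame N w W \<longleftrightarrow> (\<forall>i<N. w i \<in> W) \<and> vec.span (w ` {..<N}) = W"

definition oblique_dual_frame ::
  "nat \<Rightarrow> (nat \<Rightarrow> complex^'n) \<Rightarrow> (complex^'n) set \<Rightarrow> (nat \<Rightarrow> complex^'n) \<Rightarrow> (complex^'n) set \<Rightarrow> bool" where
  "oblique_dual_frame N w W v V \<longleftrightarrow> is_frame N v V \<and>
     (\<forall>f. oblique_proj W (corth V) f = (\<Sum>i<N. cinner f (v i) *s w i))"

end

theory Submission
  imports Defs
begin

(*
  Write a_ij = <w_i, v_j>. Since x = sum_i <x, v_i> w_i for every x in W, the trace of (a_ij) is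
  dim W, and the power-mean inequality for the moduli |a_ii| gives the first bound; equality forces
  all a_ii to be equal, hence equal to dim W / N. For the second bound, the Gram matrix
  g_ij = <w_i, S^+ w_j> of the canonical dual frame is Hermitian with g a = a and a g = g, whence
  ||a - g||^2 = ||a||^2 - dim W in the Frobenius norm. So ||a||^2 >= dim W, with equality iff
  a = g, i.e. iff each v_j - pi_{V W^perp} S^+ w_j (a vector of V) is orthogonal to W, which
  means it vanishes. The power-mean inequality applied to the |a_ij|^2 finishes the proof.
*)

lemma cinner_add_left: "cinner (x + y) z = cinner x z + cinner y z"
  by (simp add: cinner_def sum.distrib algebra_simps)

lemma cinner_add_right: "cinner x (y + z) = cinner x y + cinner x z"
  by (simp add: cinner_def sum.distrib algebra_simps)

lemma cinner_diff_left: "cinner (x - y) z = cinner x z - cinner y z"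
  by (simp add: cinner_def sum_subtractf algebra_simps)

lemma cinner_diff_right: "cinner x (y - z) = cinner x y - cinner x z"
  by (simp add: cinner_def sum_subtractf algebra_simps)

lemma cinner_scale_left: "cinner (c *s x) y = c * cinner x y"
  by (simp add: cinner_def sum_distrib_left algebra_simps)

lemma cinner_scale_right: "cinner x (c *s y) = cnj c * cinner x y"
  by (simp add: cinner_def sum_distrib_left algebra_simps)

lemma cinner_zero_left [simp]: "cinner 0 y = 0"
  by (simp add: cinner_def)

lemma cinner_zero_right [simp]: "cinner x 0 = 0"
  by (simp add: cinner_def)

lemma cinner_sum_left: "cinner (\<Sum>i\<in>I. f i) y = (\<Sum>i\<in>I. cinner (f i) y)"
  by (induction I rule: infinite_finite_induct) (auto simp: cinner_add_left)

lemma cinner_sum_right: "cinner x (\<Sum>i\<in>I. f i) = (\<Sum>i\<in>I. cinner x (f i))"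
  by (induction I rule: infinite_finite_induct) (auto simp: cinner_add_right)

lemma cinner_commute: "cinner x y = cnj (cinner y x)"
  by (simp add: cinner_def mult.commute)

lemma cinner_self_eq_0: "cinner x x = 0 \<longleftrightarrow> x = 0"
proof
  have norm: "cinner x x = of_real (\<Sum>i\<in>UNIV. (cmod (x$i))\<^sup>2)"
    unfolding cinner_def of_real_sum complex_norm_square ..
  assume "cinner x x = 0"
  then have "(\<Sum>i\<in>UNIV. (cmod (x$i))\<^sup>2) = 0"
    unfolding norm of_real_eq_0_iff .
  then show "x = 0"
    by (simp add: sum_nonneg_eq_0_iff vec_eq_iff)
qed (simp add: cinner_def)

lemma cinner_cadj: "cinner (A *v x) y = cinner x (cadj A *v y)"
  by (simp add: cinner_def cadj_def matrix_vector_mult_def sum_distrib_left sum_distrib_right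
      algebra_simps; subst sum.swap; simp add: algebra_simps)

lemma cadj_mult: "cadj (A ** B) = cadj B ** cadj A"
  by (simp add: cadj_def matrix_matrix_mult_def vec_eq_iff mult.commute)

lemma cadj_cadj [simp]: "cadj (cadj A) = A"
  by (simp add: cadj_def vec_eq_iff)

lemma cadj_sum: "cadj (\<Sum>i\<in>I. f i) = (\<Sum>i\<in>I. cadj (f i))"
  by (induction I rule: infinite_finite_induct) (auto simp: cadj_def vec_eq_iff)

lemma cadj_outer_self: "cadj (outer x x) = outer x x"
  by (simp add: cadj_def outer_def vec_eq_iff mult.commute)

lemma outer_mult_vec: "outer x y *v z = cinner z y *s x"
  by (simp add: outer_def cinner_def matrix_vector_mult_def vec_eq_iff sum_distrib_left
      algebra_simps)

lemma sum_matrix_mult_vec: "(\<Sum>i\<in>I. f i) *v z = (\<Sum>i\<in>I. f i *v z)"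
  by (induction I rule: infinite_finite_induct) (auto simp: matrix_vector_mult_add_rdistrib)

section \<open>Moore--Penrose inverse\<close>

definition is_mp_inverse :: "complex^'n^'m \<Rightarrow> complex^'m^'n \<Rightarrow> bool" where
  "is_mp_inverse A X \<longleftrightarrow> A ** X ** A = A \<and> X ** A ** X = X \<and>
      cadj (A ** X) = A ** X \<and> cadj (X ** A) = X ** A"

lemma mp_inverse_unique:
  assumes X: "is_mp_inverse A X" and Y: "is_mp_inverse A Y"
  shows "X = Y"
proof -
  have "Y = cadj (Y ** A) ** Y"
    using Y by (simp add: is_mp_inverse_def)
  also have "\<dots> = cadj (A ** X ** A) ** cadj Y ** Y"
    using X by (simp add: is_mp_inverse_def cadj_mult)
  also have "\<dots> = cadj (X ** A) ** cadj (Y ** A) ** Y"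
    by (simp add: cadj_mult matrix_mul_assoc)
  also have "\<dots> = X ** A ** (Y ** A ** Y)"
    using X Y unfolding is_mp_inverse_def by (metis matrix_mul_assoc)
  finally have Y_eq: "Y = X ** A ** Y"
    using Y by (simp add: is_mp_inverse_def)
  have "X = X ** cadj (A ** X)"
    using X by (simp add: is_mp_inverse_def matrix_mul_assoc)
  also have "\<dots> = X ** cadj (A ** Y ** A ** X)"
    using Y by (simp add: is_mp_inverse_def)
  also have "\<dots> = X ** cadj (A ** X) ** cadj (A ** Y)"
    by (simp add: cadj_mult matrix_mul_assoc)
  also have "\<dots> = X ** A ** X ** A ** Y"
    using X Y unfolding is_mp_inverse_def by (metis matrix_mul_assoc)
  also have "\<dots> = Y"
    using X Y_eq by (simp add: is_mp_inverse_def)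
  finally show ?thesis .
qed

lemma mp_inverse_eqI: "is_mp_inverse A X \<Longrightarrow> mp_inverse A = X"
  unfolding mp_inverse_def is_mp_inverse_def[symmetric]
  using mp_inverse_unique by blast

lemma cadj_mult_cancel_left:
  fixes B :: "complex^'n^'m" and Y Y' :: "complex^'p^'n"
  assumes "cadj B ** B ** Y = cadj B ** B ** Y'"
  shows "B ** Y = B ** Y'"
proof -
  have "B *v (Y *v x - Y' *v x) = 0" for x
  proof -
    let ?u = "B *v (Y *v x - Y' *v x)"
    have "cadj B *v ?u = (cadj B ** B ** Y) *v x - (cadj B ** B ** Y') *v x"
      by (simp add: matrix_vector_mult_diff_distrib matrix_vector_mul_assoc matrix_mul_assoc)
    then have "cinner ?u ?u = 0"
      using assms cinner_cadj[of B "Y *v x - Y' *v x" ?u] by simp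
    then show ?thesis
      by (simp add: cinner_self_eq_0)
  qed
  then show ?thesis
    by (simp add: matrix_eq matrix_vector_mul_assoc[symmetric] matrix_vector_mult_diff_distrib)
qed

lemma g_inverse_exists:
  fixes A :: "'a::field^'n^'m"
  obtains Z where "A ** Z ** A = A"
proof -
  obtain g where g: "Vector_Spaces.linear (*s) (*s) g" "\<forall>y\<in>range ((*v) A). A *v g y = y"
    using vec.linear_exists_right_inverse_on[OF matrix_vector_mul_linear_gen, of UNIV A]
    by auto
  have "(A ** matrix g ** A) *v x = A *v x" for x
    using g by (simp add: matrix_vector_mul_assoc[symmetric] matrix_works)
  then show ?thesis
    using that by (auto simp: matrix_eq)
qed

lemma hermitian_g_inverse_exists:
  fixes A :: "complex^'n^'n"
  assumes "cadj A = A"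
  obtains H where "cadj H = H" "A ** H ** A = A"
proof -
  obtain Z where Z: "A ** Z ** A = A"
    using g_inverse_exists by blast
  have "cadj (Z ** A ** cadj Z) = Z ** A ** cadj Z"
    using assms by (simp add: cadj_mult matrix_mul_assoc)
  moreover have "A ** (Z ** A ** cadj Z) ** A = A"
  proof -
    have "A ** (Z ** A ** cadj Z) ** A = A ** cadj Z ** A"
      using Z by (simp add: matrix_mul_assoc)
    also have "\<dots> = cadj (A ** Z ** A)"
      using assms by (simp add: cadj_mult matrix_mul_assoc)
    finally show ?thesis
      using Z assms by simp
  qed
  ultimately show ?thesis
    using that by blast
qed

lemma mp_inverse_hermitian:
  fixes S :: "complex^'n^'n"
  assumes S: "cadj S = S"
  shows "is_mp_inverse S (mp_inverse S)" and "cadj (mp_inverse S) = mp_inverse S"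
proof -
  obtain H where H: "cadj H = H" "S ** S ** H ** (S ** S) = S ** S"
    using hermitian_g_inverse_exists[of "S ** S"] S by (auto simp: cadj_mult matrix_mul_assoc)
  have SHSS: "S ** H ** S ** S = S"
  proof -
    have "cadj S ** S ** (H ** S ** S) = cadj S ** S ** mat 1"
      using H S by (simp add: matrix_mul_assoc)
    from cadj_mult_cancel_left[OF this] show ?thesis
      by (simp add: matrix_mul_assoc)
  qed
  have SSHS: "S ** S ** H ** S = S"
    using arg_cong[OF SHSS, of cadj] S H by (simp add: cadj_mult matrix_mul_assoc)
  \<comment> \<open>\<open>S ** H ** S\<close> is the orthogonal projection onto the range of \<open>S\<close>.\<close>
  define X where "X = S ** H ** S ** H ** S"
  have "S ** X = S ** H ** S" "X ** S = S ** H ** S"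
    unfolding X_def using SHSS SSHS by (metis matrix_mul_assoc)+
  moreover have "S ** X ** S = S" "X ** S ** X = X"
    unfolding X_def using SHSS SSHS by (metis matrix_mul_assoc)+
  moreover have "cadj (S ** H ** S) = S ** H ** S" "cadj X = X"
    unfolding X_def using S H by (simp_all add: cadj_mult matrix_mul_assoc)
  ultimately have "is_mp_inverse S X"
    by (simp add: is_mp_inverse_def)
  with \<open>cadj X = X\<close> show "is_mp_inverse S (mp_inverse S)" "cadj (mp_inverse S) = mp_inverse S"
    by (simp_all add: mp_inverse_eqI)
qed

section \<open>Power means\<close>

lemma power_tangent_gap:
  fixes t m :: "'a::comm_ring_1"
  shows "t ^ Suc n - (m ^ Suc n + of_nat (Suc n) * m ^ n * (t - m))
           = (\<Sum>p<Suc n. m ^ (n - p) * ((t - m) * (t ^ p - m ^ p)))"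
proof -
  have "of_nat (Suc n) * m ^ n = (\<Sum>p<Suc n. m ^ p * m ^ (n - p))"
    by (simp add: power_add[symmetric])
  then have "t ^ Suc n - (m ^ Suc n + of_nat (Suc n) * m ^ n * (t - m))
      = (t - m) * (\<Sum>p<Suc n. t ^ p * m ^ (n - p)) - (\<Sum>p<Suc n. m ^ p * m ^ (n - p)) * (t - m)"
    by (simp only: diff_diff_eq[symmetric] diff_power_eq_sum)
  also have "\<dots> = (\<Sum>p<Suc n. m ^ (n - p) * ((t - m) * (t ^ p - m ^ p)))"
    by (simp add: sum_distrib_left sum_distrib_right algebra_simps flip: sum_subtractf
        del: sum.lessThan_Suc)
  finally show ?thesis .
qed

lemma diff_mult_power_diff_nonneg:
  fixes t m :: real
  assumes "0 \<le> t" "0 \<le> m"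
  shows "0 \<le> (t - m) * (t ^ p - m ^ p)"
proof (cases "t \<le> m")
  case True
  then have "t ^ p \<le> m ^ p"
    using assms by (intro power_mono) auto
  with True show ?thesis
    by (simp add: mult_nonpos_nonpos)
next
  case False
  then have "m ^ p \<le> t ^ p"
    using assms by (intro power_mono) auto
  with False show ?thesis
    by simp
qed

lemma power_ge_tangent:
  fixes t m :: real
  assumes "0 \<le> t" "0 \<le> m"
  shows "m ^ Suc n + real (Suc n) * m ^ n * (t - m) \<le> t ^ Suc n"
proof -
  have "0 \<le> (\<Sum>p<Suc n. m ^ (n - p) * ((t - m) * (t ^ p - m ^ p)))"
    using assms by (intro sum_nonneg mult_nonneg_nonneg diff_mult_power_diff_nonneg) auto
  then show ?thesis
    using power_tangent_gap[of t n m] by simp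
qed

lemma power_gt_tangent:
  fixes t m :: real
  assumes "0 \<le> t" "0 \<le> m" "t \<noteq> m" "1 \<le> n"
  shows "m ^ Suc n + real (Suc n) * m ^ n * (t - m) < t ^ Suc n"
proof -
  have "0 < (t - m) * (t ^ n - m ^ n)"
  proof (cases "t < m")
    case True
    then have "t ^ n < m ^ n"
      using assms by (simp add: power_strict_mono)
    with True show ?thesis
      by (simp add: mult_neg_neg)
  next
    case False
    then have "m < t" "m ^ n < t ^ n"
      using assms by (simp_all add: power_strict_mono)
    then show ?thesis
      by simp
  qed
  then have "0 < (\<Sum>p<Suc n. m ^ (n - p) * ((t - m) * (t ^ p - m ^ p)))"
    using assms
    by (intro sum_pos2[of _ n]) (auto intro: mult_nonneg_nonneg diff_mult_power_diff_nonneg)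
  then show ?thesis
    using power_tangent_gap[of t n m] by simp
qed

lemma power_sum_eq_tangent_sum_at_mean:
  fixes x :: "'i \<Rightarrow> real"
  assumes "finite I" "I \<noteq> {}"
  defines "m \<equiv> (\<Sum>i\<in>I. x i) / real (card I)"
  shows "(\<Sum>i\<in>I. x i) ^ Suc n
           = real (card I) ^ n * (\<Sum>i\<in>I. m ^ Suc n + real (Suc n) * m ^ n * (x i - m))"
proof -
  have card: "real (card I) > 0"
    using assms by (simp add: card_gt_0_iff)
  then have sum: "(\<Sum>i\<in>I. x i) = real (card I) * m"
    by (simp add: m_def)
  then have "(\<Sum>i\<in>I. m ^ Suc n + real (Suc n) * m ^ n * (x i - m)) = real (card I) * m ^ Suc n"
    by (simp add: sum.distrib sum_subtractf flip: sum_distrib_left)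
  then show ?thesis
    by (simp add: sum power_mult_distrib)
qed

lemma power_mean_le:
  fixes x :: "'i \<Rightarrow> real"
  assumes "finite I" and nonneg: "\<And>i. i \<in> I \<Longrightarrow> 0 \<le> x i"
  shows "(\<Sum>i\<in>I. x i) ^ Suc n \<le> real (card I) ^ n * (\<Sum>i\<in>I. x i ^ Suc n)"
proof (cases "I = {}")
  case False
  define m where "m = (\<Sum>i\<in>I. x i) / real (card I)"
  have "0 \<le> m"
    using nonneg by (simp add: m_def sum_nonneg)
  then have "(\<Sum>i\<in>I. m ^ Suc n + real (Suc n) * m ^ n * (x i - m)) \<le> (\<Sum>i\<in>I. x i ^ Suc n)"
    using nonneg by (intro sum_mono power_ge_tangent) auto
  then show ?thesis
    using power_sum_eq_tangent_sum_at_mean[OF \<open>finite I\<close> False, of x n]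
    by (simp add: m_def mult_left_mono)
qed simp

lemma power_mean_eq_imp_eq_mean:
  fixes x :: "'i \<Rightarrow> real"
  assumes "finite I" and nonneg: "\<And>i. i \<in> I \<Longrightarrow> 0 \<le> x i" and "1 \<le> n"
    and eq: "(\<Sum>i\<in>I. x i) ^ Suc n = real (card I) ^ n * (\<Sum>i\<in>I. x i ^ Suc n)"
    and "j \<in> I"
  shows "x j = (\<Sum>i\<in>I. x i) / real (card I)"
proof (rule ccontr)
  define m where "m = (\<Sum>i\<in>I. x i) / real (card I)"
  assume "x j \<noteq> (\<Sum>i\<in>I. x i) / real (card I)"
  then have "x j \<noteq> m"
    by (simp add: m_def)
  have "I \<noteq> {}" "0 < real (card I)"
    using \<open>j \<in> I\<close> \<open>finite I\<close> by (auto simp: card_gt_0_iff)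
  have "0 \<le> m"
    using nonneg by (simp add: m_def sum_nonneg)
  have "(\<Sum>i\<in>I. m ^ Suc n + real (Suc n) * m ^ n * (x i - m)) < (\<Sum>i\<in>I. x i ^ Suc n)"
  proof (rule sum_strict_mono_ex1[OF \<open>finite I\<close>])
    show "\<forall>i\<in>I. m ^ Suc n + real (Suc n) * m ^ n * (x i - m) \<le> x i ^ Suc n"
      using nonneg \<open>0 \<le> m\<close> power_ge_tangent by blast
    show "\<exists>i\<in>I. m ^ Suc n + real (Suc n) * m ^ n * (x i - m) < x i ^ Suc n"
      using power_gt_tangent[OF nonneg[OF \<open>j \<in> I\<close>] \<open>0 \<le> m\<close> \<open>x j \<noteq> m\<close> \<open>1 \<le> n\<close>] \<open>j \<in> I\<close>
      by blast
  qed
  then show False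
    using eq power_sum_eq_tangent_sum_at_mean[OF \<open>finite I\<close> \<open>I \<noteq> {}\<close>, of x n]
      \<open>0 < real (card I)\<close> by (simp add: m_def)
qed

lemma power_sum_ge_of_sum_ge:
  fixes x :: "'i \<Rightarrow> real"
  assumes "finite I" "\<And>i. i \<in> I \<Longrightarrow> 0 \<le> x i" "0 \<le> d" "d \<le> (\<Sum>i\<in>I. x i)"
  shows "d ^ Suc n / real (card I) ^ n \<le> (\<Sum>i\<in>I. x i ^ Suc n)"
proof (cases "I = {}")
  case False
  then have "0 < real (card I)"
    using \<open>finite I\<close> by (simp add: card_gt_0_iff)
  have "d ^ Suc n \<le> (\<Sum>i\<in>I. x i) ^ Suc n"
    using assms by (intro power_mono) auto
  also have "\<dots> \<le> real (card I) ^ n * (\<Sum>i\<in>I. x i ^ Suc n)"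
    using power_mean_le assms by blast
  finally show ?thesis
    using \<open>0 < real (card I)\<close> by (simp add: divide_le_eq mult.commute)
qed (use assms in simp)

lemma power_sum_eq_of_sum_ge_iff:
  fixes x :: "'i \<Rightarrow> real"
  assumes "finite I" and nonneg: "\<And>i. i \<in> I \<Longrightarrow> 0 \<le> x i"
    and "0 \<le> d" "d \<le> (\<Sum>i\<in>I. x i)" "1 \<le> n"
  shows "(\<Sum>i\<in>I. x i ^ Suc n) = d ^ Suc n / real (card I) ^ n
           \<longleftrightarrow> (\<forall>i\<in>I. x i = d / real (card I))"
proof (cases "I = {}")
  case False
  then have c: "0 < real (card I)"
    using \<open>finite I\<close> by (simp add: card_gt_0_iff)
  show ?thesis
  proof
    assume "(\<Sum>i\<in>I. x i ^ Suc n) = d ^ Suc n / real (card I) ^ n"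
    then have eq: "real (card I) ^ n * (\<Sum>i\<in>I. x i ^ Suc n) = d ^ Suc n"
      using c by simp
    have "d ^ Suc n \<le> (\<Sum>i\<in>I. x i) ^ Suc n"
      using assms by (intro power_mono) auto
    moreover have "(\<Sum>i\<in>I. x i) ^ Suc n \<le> real (card I) ^ n * (\<Sum>i\<in>I. x i ^ Suc n)"
      using power_mean_le[OF \<open>finite I\<close>] nonneg by blast
    ultimately have mean_eq: "(\<Sum>i\<in>I. x i) ^ Suc n = real (card I) ^ n * (\<Sum>i\<in>I. x i ^ Suc n)"
      and "(\<Sum>i\<in>I. x i) ^ Suc n = d ^ Suc n"
      using eq by linarith+
    then have "(\<Sum>i\<in>I. x i) = d"
      using \<open>0 \<le> d\<close> nonneg by (metis power_eq_imp_eq_base sum_nonneg zero_less_Suc)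
    then show "\<forall>i\<in>I. x i = d / real (card I)"
      using power_mean_eq_imp_eq_mean[OF \<open>finite I\<close> nonneg \<open>1 \<le> n\<close> mean_eq] by blast
  next
    assume "\<forall>i\<in>I. x i = d / real (card I)"
    then have "(\<Sum>i\<in>I. x i ^ Suc n) = real (card I) * (d / real (card I)) ^ Suc n"
      by simp
    also have "\<dots> = d ^ Suc n / real (card I) ^ n"
      using c by (simp add: power_divide field_simps)
    finally show "(\<Sum>i\<in>I. x i ^ Suc n) = d ^ Suc n / real (card I) ^ n" .
  qed
qed (use assms in simp)

lemma powi_minus_mult: "(x::real) powi (- int n) * y = y / x ^ n"
  by (simp add: power_int_minus divide_inverse mult.commute)

lemma eq_mean_if_cmod_eq_mean:
  fixes a :: "'i \<Rightarrow> complex"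
  assumes "finite I" and sum: "(\<Sum>i\<in>I. a i) = of_real s"
    and cmod_mean: "\<forall>i\<in>I. cmod (a i) = s / real (card I)"
  shows "\<forall>i\<in>I. a i = of_real (s / real (card I))"
proof
  fix j assume "j \<in> I"
  then have "real (card I) \<noteq> 0"
    using \<open>finite I\<close> by (auto simp: card_eq_0_iff)
  then have "(\<Sum>i\<in>I. cmod (a i)) = s"
    using cmod_mean by simp
  moreover have "(\<Sum>i\<in>I. Re (a i)) = s"
    using arg_cong[OF sum, of Re] by (simp add: Re_sum)
  ultimately have "(\<Sum>i\<in>I. cmod (a i) - Re (a i)) = 0"
    by (simp add: sum_subtractf)
  then have "Re (a j) = cmod (a j)"
    using \<open>finite I\<close> \<open>j \<in> I\<close> by (simp add: sum_nonneg_eq_0_iff complex_Re_le_cmod)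
  moreover have "(cmod (a j))\<^sup>2 = (Re (a j))\<^sup>2 + (Im (a j))\<^sup>2"
    by (rule cmod_power2)
  ultimately have "a j = of_real (cmod (a j))"
    by (simp add: complex_eq_iff)
  then show "a j = of_real (s / real (card I))"
    using cmod_mean \<open>j \<in> I\<close> by simp
qed

section \<open>Frame operator and canonical dual frame\<close>

lemma frame_op_hermitian: "cadj (frame_op N w) = frame_op N w"
  unfolding frame_op_def by (simp add: cadj_sum cadj_outer_self)

lemma frame_op_mult_vec: "frame_op N w *v y = (\<Sum>j<N. cinner y (w j) *s w j)"
  unfolding frame_op_def by (simp add: sum_matrix_mult_vec outer_mult_vec)

lemma frame_op_kernel:
  assumes "frame_op N w *v u = 0" "j < N"
  shows "cinner u (w j) = 0"
proof -
  have "cinner (frame_op N w *v u) u = of_real (\<Sum>j<N. (cmod (cinner u (w j)))\<^sup>2)"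
    unfolding frame_op_mult_vec
    by (simp add: cinner_sum_left cinner_scale_left complex_norm_square cinner_commute[of "w _" u]
        del: of_real_power)
  then have "(\<Sum>j<N. (cmod (cinner u (w j)))\<^sup>2) = 0"
    using assms(1) by (simp del: of_real_power flip: of_real_sum)
  then show ?thesis
    using assms(2) by (simp add: sum_nonneg_eq_0_iff)
qed

lemma frame_op_mp_inverse_frame:
  assumes "i < N"
  shows "frame_op N w *v (mp_inverse (frame_op N w) *v w i) = w i"
proof -
  let ?S = "frame_op N w"
  let ?P = "?S ** mp_inverse ?S"
  \<comment> \<open>\<open>?P\<close> is an orthogonal projection with \<open>?S ** ?P = ?S\<close>, so \<open>u = w i - ?P *v w i\<close> lies
    in the kernel of \<open>?S\<close> and is orthogonal to both \<open>w i\<close> and \<open>?P *v w i\<close>.\<close>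
  have SXS: "?S ** mp_inverse ?S ** ?S = ?S" and P_herm: "cadj ?P = ?P"
    using mp_inverse_hermitian(1)[OF frame_op_hermitian[of N w]]
    by (simp_all add: is_mp_inverse_def)
  have P_idem: "?P ** ?P = ?P"
    using SXS by (metis matrix_mul_assoc)
  have "?S = cadj (?S ** mp_inverse ?S ** ?S)"
    using SXS frame_op_hermitian[of N w] by simp
  also have "\<dots> = cadj ?S ** cadj ?P"
    by (rule cadj_mult)
  finally have SP: "?S ** ?P = ?S"
    using P_herm frame_op_hermitian[of N w] by simp
  define u where "u = w i - ?P *v w i"
  have "?S *v u = 0"
    unfolding u_def matrix_vector_mult_diff_distrib matrix_vector_mul_assoc SP by simp
  then have "cinner u (w i) = 0"
    using frame_op_kernel assms by blast
  moreover have "cinner u (?P *v w i) = 0"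
  proof -
    have "?P *v u = 0"
      unfolding u_def matrix_vector_mult_diff_distrib matrix_vector_mul_assoc P_idem by simp
    then show ?thesis
      using cinner_cadj[of ?P u "w i"] P_herm by simp
  qed
  ultimately have "cinner u u = 0"
    by (simp add: u_def cinner_diff_right)
  then show ?thesis
    by (simp add: u_def cinner_self_eq_0 matrix_vector_mul_assoc)
qed

lemma canonical_dual_reconstruction:
  assumes "i < N"
  shows "(\<Sum>j<N. cinner (w i) (mp_inverse (frame_op N w) *v w j) *s w j) = w i"
proof -
  have "cinner (w i) (mp_inverse (frame_op N w) *v w j)
      = cinner (mp_inverse (frame_op N w) *v w i) (w j)" for j
    using cinner_cadj[of "mp_inverse (frame_op N w)" "w i" "w j"]
      mp_inverse_hermitian(2)[OF frame_op_hermitian[of N w]] by simp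
  then show ?thesis
    using frame_op_mp_inverse_frame[OF assms] by (simp add: frame_op_mult_vec)
qed

lemma sum_cinner_eq_dim:
  assumes mem: "\<And>i. i < N \<Longrightarrow> w i \<in> W"
    and reconstruct: "\<And>x. x \<in> W \<Longrightarrow> (\<Sum>i<N. cinner x (v i) *s w i) = x"
  shows "(\<Sum>i<N. cinner (w i) (v i)) = of_nat (vec.dim W)"
proof -
  obtain B where B: "B \<subseteq> W" "vec.independent B" "W \<subseteq> vec.span B" "card B = vec.dim W"
    using vec.basis_exists by blast
  have "finite B"
    using B(2) vec.finiteI_independent by blast
  let ?R = "vec.representation B"
  have w_span: "w i \<in> vec.span B" if "i < N" for i
    using mem that B(3) by blast
  have w_expand: "w i = (\<Sum>b\<in>B. ?R (w i) b *s b)" if "i < N" for i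
    using vec.sum_representation_eq[OF B(2) w_span[OF that] \<open>finite B\<close>] by simp
  have coeff: "(\<Sum>i<N. cinner b (v i) * ?R (w i) b) = 1" if "b \<in> B" for b
  proof -
    have "1 = ?R b b"
      using vec.representation_basis[OF B(2) that] by simp
    also have "\<dots> = ?R (\<Sum>i<N. cinner b (v i) *s w i) b"
      using reconstruct that B(1) by auto
    also have "\<dots> = (\<Sum>i<N. ?R (cinner b (v i) *s w i) b)"
    proof -
      have "?R (\<Sum>i<N. cinner b (v i) *s w i) = (\<lambda>b'. \<Sum>i<N. ?R (cinner b (v i) *s w i) b')"
        by (rule vec.representation_sum[OF B(2)]) (simp add: vec.span_scale w_span)
      then show ?thesis
        by simp
    qed
    also have "\<dots> = (\<Sum>i<N. cinner b (v i) * ?R (w i) b)"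
      using vec.representation_scale[OF B(2) w_span] by simp
    finally show ?thesis
      by simp
  qed
  have "(\<Sum>i<N. cinner (w i) (v i)) = (\<Sum>i<N. \<Sum>b\<in>B. ?R (w i) b * cinner b (v i))"
    by (intro sum.cong refl) (subst w_expand, auto simp: cinner_sum_left cinner_scale_left)
  also have "\<dots> = (\<Sum>b\<in>B. \<Sum>i<N. cinner b (v i) * ?R (w i) b)"
    by (subst sum.swap) (simp add: mult.commute)
  also have "\<dots> = of_nat (card B)"
    using coeff by simp
  finally show ?thesis
    using B(4) by simp
qed

lemma idempotent_if_absorbs:
  fixes M G :: "nat \<Rightarrow> nat \<Rightarrow> complex"
  assumes GM: "\<And>i l. i < N \<Longrightarrow> l < N \<Longrightarrow> (\<Sum>j<N. G i j * M j l) = M i l"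
    and MG: "\<And>i l. i < N \<Longrightarrow> l < N \<Longrightarrow> (\<Sum>j<N. M i j * G j l) = G i l"
    and "i < N" "l < N"
  shows "(\<Sum>j<N. G i j * G j l) = G i l"
proof -
  have "(\<Sum>j<N. G i j * G j l) = (\<Sum>j<N. G i j * (\<Sum>k<N. M j k * G k l))"
    using MG \<open>l < N\<close> by simp
  also have "\<dots> = (\<Sum>k<N. (\<Sum>j<N. G i j * M j k) * G k l)"
    by (simp add: sum_distrib_left sum_distrib_right mult.assoc) (rule sum.swap)
  also have "\<dots> = G i l"
    using GM MG \<open>i < N\<close> \<open>l < N\<close> by simp
  finally show ?thesis .
qed

lemma frobenius_dist_sq_eq:
  fixes M G :: "nat \<Rightarrow> nat \<Rightarrow> complex"
  assumes herm: "\<And>i j. i < N \<Longrightarrow> j < N \<Longrightarrow> cnj (G j i) = G i j"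
    and GM: "\<And>i l. i < N \<Longrightarrow> l < N \<Longrightarrow> (\<Sum>j<N. G i j * M j l) = M i l"
    and MG: "\<And>i l. i < N \<Longrightarrow> l < N \<Longrightarrow> (\<Sum>j<N. M i j * G j l) = G i l"
  shows "complex_of_real (\<Sum>i<N. \<Sum>j<N. (cmod (M i j - G i j))\<^sup>2)
           = complex_of_real (\<Sum>i<N. \<Sum>j<N. (cmod (M i j))\<^sup>2) - (\<Sum>i<N. M i i)"
proof -
  have norm_sq: "complex_of_real ((cmod z)\<^sup>2) = z * cnj z" for z
    by (rule complex_norm_square)
  have trace_MG: "(\<Sum>i<N. \<Sum>j<N. M i j * G j i) = (\<Sum>i<N. G i i)"
    using MG by simp
  have trace_GM: "(\<Sum>i<N. \<Sum>j<N. M i j * G j i) = (\<Sum>i<N. M i i)"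
    using GM by (subst sum.swap) (simp add: mult.commute)
  have expand: "(M i j - G i j) * cnj (M i j - G i j)
      = M i j * cnj (M i j) - M i j * G j i - cnj (M i j * G j i) + G i j * G j i"
    if "i < N" "j < N" for i j
    using herm[OF that] herm[OF that(2,1)] by (simp add: algebra_simps)
  have "complex_of_real (\<Sum>i<N. \<Sum>j<N. (cmod (M i j - G i j))\<^sup>2)
      = (\<Sum>i<N. \<Sum>j<N. (M i j - G i j) * cnj (M i j - G i j))"
    by (simp only: of_real_sum norm_sq)
  also have "\<dots> = (\<Sum>i<N. \<Sum>j<N.
      M i j * cnj (M i j) - M i j * G j i - cnj (M i j * G j i) + G i j * G j i)"
    by (intro sum.cong refl expand) auto
  also have "\<dots> = (\<Sum>i<N. \<Sum>j<N. M i j * cnj (M i j)) - (\<Sum>i<N. \<Sum>j<N. M i j * G j i)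
        - (\<Sum>i<N. \<Sum>j<N. cnj (M i j * G j i)) + (\<Sum>i<N. \<Sum>j<N. G i j * G j i)"
    by (simp only: sum.distrib sum_subtractf)
  also have "\<dots> = complex_of_real (\<Sum>i<N. \<Sum>j<N. (cmod (M i j))\<^sup>2) - (\<Sum>i<N. M i i)"
  proof -
    have "(\<Sum>i<N. \<Sum>j<N. cnj (M i j * G j i)) = (\<Sum>i<N. cnj (G i i))"
      using trace_MG by (simp flip: cnj_sum del: complex_cnj_mult)
    also have "\<dots> = (\<Sum>i<N. G i i)"
      using herm by simp
    finally show ?thesis
      using trace_MG trace_GM idempotent_if_absorbs[of N G M, OF GM MG]
      by (simp add: of_real_sum norm_sq del: of_real_power)
  qed
  finally show ?thesis .
qed

section \<open>Oblique dual frames\<close>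

lemma subspace_corth: "vec.subspace (corth B)"
  by (simp add: vec.subspace_def corth_def cinner_add_left cinner_scale_left)

lemma oblique_proj_eqI:
  assumes "vec.subspace A" "vec.subspace C" "A \<inter> C = {0}" "a \<in> A" "f - a \<in> C"
  shows "oblique_proj A C f = a"
  unfolding oblique_proj_def
proof (rule the_equality)
  fix a' assume a': "a' \<in> A \<and> f - a' \<in> C"
  have "a - a' \<in> A"
    using assms a' by (simp add: vec.subspace_diff)
  moreover have "a - a' \<in> C"
    using vec.subspace_diff[OF \<open>vec.subspace C\<close>, of "f - a'" "f - a"] assms a' by simp
  ultimately have "a - a' \<in> A \<inter> C"
    by blast
  then show "a' = a"
    using \<open>A \<inter> C = {0}\<close> by simp
qed (use assms in simp)

locale oblique_dual_frames =
  fixes W V :: "(complex^'n) set" and w v :: "nat \<Rightarrow> complex^'n" and N :: nat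
  assumes subspace_W: "vec.subspace W" and subspace_V: "vec.subspace V"
    and direct_sum: "direct_sum_UNIV W (corth V)"
    and frame: "is_frame N w W"
    and dual: "oblique_dual_frame N w W v V"
begin

lemma frame_mem: "i < N \<Longrightarrow> w i \<in> W"
  using frame by (simp add: is_frame_def)

lemma dual_mem: "i < N \<Longrightarrow> v i \<in> V"
  using dual by (simp add: oblique_dual_frame_def is_frame_def)

lemma reconstruction:
  assumes "x \<in> W"
  shows "(\<Sum>i<N. cinner x (v i) *s w i) = x"
proof -
  have "W \<inter> corth V = {0}"
    using direct_sum by (simp add: direct_sum_UNIV_def)
  then have "oblique_proj W (corth V) x = x"
    using assms subspace_W subspace_corth vec.subspace_0[OF subspace_corth]
    by (intro oblique_proj_eqI) auto
  then show ?thesis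
    using dual by (simp add: oblique_dual_frame_def)
qed

lemma cinner_eq_0_if_orth_frame:
  assumes "\<And>i. i < N \<Longrightarrow> cinner (w i) y = 0" "x \<in> W"
  shows "cinner x y = 0"
proof -
  have "cinner x y = cinner (\<Sum>i<N. cinner x (v i) *s w i) y"
    using reconstruction[OF \<open>x \<in> W\<close>] by simp
  also have "\<dots> = 0"
    using assms(1) by (simp add: cinner_sum_left cinner_scale_left)
  finally show ?thesis .
qed

lemma V_inter_corth_W: "V \<inter> corth W = {0}"
proof -
  have "x = 0" if "x \<in> V" "x \<in> corth W" for x
  proof -
    obtain a b where ab: "a \<in> W" "b \<in> corth V" "x = a + b"
      using direct_sum unfolding direct_sum_UNIV_def by blast
    have "cinner x a = 0"
      using that(2) ab(1) by (simp add: corth_def)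
    moreover have "cinner x b = 0"
      using ab(2) that(1) cinner_commute[of x b] by (simp add: corth_def)
    ultimately have "cinner x x = 0"
      using ab(3) by (simp add: cinner_add_right)
    then show ?thesis
      by (simp add: cinner_self_eq_0)
  qed
  then show ?thesis
    using vec.subspace_0[OF subspace_V] vec.subspace_0[OF subspace_corth] by auto
qed

lemma oblique_proj_V:
  "oblique_proj V (corth W) f = (\<Sum>i<N. cinner f (w i) *s v i)"
proof (rule oblique_proj_eqI[OF subspace_V subspace_corth V_inter_corth_W])
  show "(\<Sum>i<N. cinner f (w i) *s v i) \<in> V"
    using dual_mem by (intro vec.subspace_sum[OF subspace_V] vec.subspace_scale[OF subspace_V]) auto
  have "cinner (\<Sum>i<N. cinner f (w i) *s v i) y = cinner f y" if "y \<in> W" for y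
  proof -
    have "cinner f y = cinner f (\<Sum>i<N. cinner y (v i) *s w i)"
      using reconstruction[OF that] by simp
    also have "\<dots> = cinner (\<Sum>i<N. cinner f (w i) *s v i) y"
      by (simp add: cinner_sum_left cinner_sum_right cinner_scale_left cinner_scale_right
          cinner_commute[of y] mult.commute)
    finally show ?thesis
      by simp
  qed
  then show "f - (\<Sum>i<N. cinner f (w i) *s v i) \<in> corth W"
    by (simp add: corth_def cinner_diff_left)
qed

lemma cinner_oblique_proj_V:
  assumes "y \<in> W"
  shows "cinner y (oblique_proj V (corth W) f) = cinner y f"
proof -
  have "cinner y (oblique_proj V (corth W) f) = cinner (\<Sum>j<N. cinner y (v j) *s w j) f"
    by (simp add: oblique_proj_V cinner_sum_left cinner_sum_right cinner_scale_left
        cinner_scale_right cinner_commute[of f] mult.commute)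
  then show ?thesis
    using reconstruction[OF assms] by simp
qed

lemma trace_eq_dim: "(\<Sum>i<N. cinner (w i) (v i)) = of_nat (vec.dim W)"
  using sum_cinner_eq_dim frame_mem reconstruction by blast

definition canonical_dual :: "nat \<Rightarrow> complex^'n" where
  "canonical_dual j = oblique_proj V (corth W) (mp_inverse (frame_op N w) *v w j)"

lemma frobenius_gram_diff:
  "(\<Sum>i<N. \<Sum>j<N. (cmod (cinner (w i) (v j) - cinner (w i) (canonical_dual j)))\<^sup>2)
     = (\<Sum>i<N. \<Sum>j<N. (cmod (cinner (w i) (v j)))\<^sup>2) - real (vec.dim W)"
proof -
  let ?X = "mp_inverse (frame_op N w)"
  have canonical: "cinner (w i) (canonical_dual j) = cinner (w i) (?X *v w j)" if "i < N" for i j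
    unfolding canonical_dual_def using cinner_oblique_proj_V frame_mem that by blast
  have herm: "cnj (cinner (w j) (?X *v w i)) = cinner (w i) (?X *v w j)" for i j
    using cinner_cadj[of ?X "w i" "w j"] mp_inverse_hermitian(2)[OF frame_op_hermitian[of N w]]
    by (simp add: cinner_commute[of "w j"])
  have GM: "(\<Sum>j<N. cinner (w i) (?X *v w j) * cinner (w j) (v l)) = cinner (w i) (v l)"
    if "i < N" for i l
    using arg_cong[OF canonical_dual_reconstruction[OF that, of w], of "\<lambda>x. cinner x (v l)"]
    by (simp add: cinner_sum_left cinner_scale_left)
  have MG: "(\<Sum>j<N. cinner (w i) (v j) * cinner (w j) (?X *v w l)) = cinner (w i) (?X *v w l)"
    if "i < N" for i l
    using arg_cong[OF reconstruction[OF frame_mem[OF that]], of "\<lambda>x. cinner x (?X *v w l)"]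
    by (simp add: cinner_sum_left cinner_scale_left)
  have "complex_of_real (\<Sum>i<N. \<Sum>j<N. (cmod (cinner (w i) (v j) - cinner (w i) (?X *v w j)))\<^sup>2)
     = complex_of_real (\<Sum>i<N. \<Sum>j<N. (cmod (cinner (w i) (v j)))\<^sup>2) - (\<Sum>i<N. cinner (w i) (v i))"
    by (rule frobenius_dist_sq_eq) (use herm GM MG in auto)
  also have "\<dots> = complex_of_real ((\<Sum>i<N. \<Sum>j<N. (cmod (cinner (w i) (v j)))\<^sup>2) - real (vec.dim W))"
    by (simp add: trace_eq_dim)
  finally show ?thesis
    unfolding of_real_eq_iff by (simp add: canonical)
qed

lemma frobenius_gram_ge_dim:
  "real (vec.dim W) \<le> (\<Sum>i<N. \<Sum>j<N. (cmod (cinner (w i) (v j)))\<^sup>2)"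
proof -
  have "0 \<le> (\<Sum>i<N. \<Sum>j<N. (cmod (cinner (w i) (v j) - cinner (w i) (canonical_dual j)))\<^sup>2)"
    by (intro sum_nonneg) auto
  then show ?thesis
    using frobenius_gram_diff by linarith
qed

lemma frobenius_gram_eq_dim_iff:
  "(\<Sum>i<N. \<Sum>j<N. (cmod (cinner (w i) (v j)))\<^sup>2) = real (vec.dim W)
     \<longleftrightarrow> (\<forall>j<N. v j = canonical_dual j)"
proof
  assume "(\<Sum>i<N. \<Sum>j<N. (cmod (cinner (w i) (v j)))\<^sup>2) = real (vec.dim W)"
  then have "(\<Sum>i<N. \<Sum>j<N. (cmod (cinner (w i) (v j) - cinner (w i) (canonical_dual j)))\<^sup>2) = 0"
    by (simp add: frobenius_gram_diff)
  then have orth: "cinner (w i) (v j - canonical_dual j) = 0" if "i < N" "j < N" for i j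
    using that by (simp add: sum_nonneg_eq_0_iff sum_nonneg cinner_diff_right)
  show "\<forall>j<N. v j = canonical_dual j"
  proof (intro allI impI)
    fix j assume "j < N"
    have "canonical_dual j \<in> V"
      unfolding canonical_dual_def oblique_proj_V
      using dual_mem
      by (intro vec.subspace_sum[OF subspace_V] vec.subspace_scale[OF subspace_V]) auto
    then have "v j - canonical_dual j \<in> V"
      using dual_mem[OF \<open>j < N\<close>] subspace_V by (simp add: vec.subspace_diff)
    moreover have "cinner (v j - canonical_dual j) y = 0" if "y \<in> W" for y
    proof -
      have "cinner y (v j - canonical_dual j) = 0"
        using cinner_eq_0_if_orth_frame orth \<open>j < N\<close> that by blast
      then show ?thesis
        using cinner_commute[of "v j - canonical_dual j" y] by simp
    qed
    then have "v j - canonical_dual j \<in> corth W"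
      by (simp add: corth_def)
    ultimately have "v j - canonical_dual j \<in> V \<inter> corth W"
      by (rule IntI)
    then show "v j = canonical_dual j"
      by (simp add: V_inter_corth_W)
  qed
next
  assume "\<forall>j<N. v j = canonical_dual j"
  then show "(\<Sum>i<N. \<Sum>j<N. (cmod (cinner (w i) (v j)))\<^sup>2) = real (vec.dim W)"
    using frobenius_gram_diff by simp
qed

lemma dim_le_sum_cmod_diagonal: "real (vec.dim W) \<le> (\<Sum>i<N. cmod (cinner (w i) (v i)))"
proof -
  have "real (vec.dim W) = cmod (\<Sum>i<N. cinner (w i) (v i))"
    by (simp add: trace_eq_dim)
  also have "\<dots> \<le> (\<Sum>i<N. cmod (cinner (w i) (v i)))"
    by (rule norm_sum)
  finally show ?thesis .
qed

lemma diagonal_power_sum_ge: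
  "real (vec.dim W) ^ Suc n / real N ^ n \<le> (\<Sum>i<N. cmod (cinner (w i) (v i)) ^ Suc n)"
  using power_sum_ge_of_sum_ge[OF _ _ _ dim_le_sum_cmod_diagonal] by simp

lemma diagonal_power_sum_eq_iff:
  assumes "1 \<le> n"
  shows "(\<Sum>i<N. cmod (cinner (w i) (v i)) ^ Suc n) = real (vec.dim W) ^ Suc n / real N ^ n
           \<longleftrightarrow> (\<forall>i<N. cinner (w i) (v i) = of_nat (vec.dim W) / of_nat N)"
proof -
  have "(\<Sum>i<N. cmod (cinner (w i) (v i)) ^ Suc n) = real (vec.dim W) ^ Suc n / real N ^ n
           \<longleftrightarrow> (\<forall>i<N. cmod (cinner (w i) (v i)) = real (vec.dim W) / real N)"
    using power_sum_eq_of_sum_ge_iff[OF _ _ _ dim_le_sum_cmod_diagonal assms]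
    by (simp add: Ball_def)
  also have "\<dots> \<longleftrightarrow> (\<forall>i<N. cinner (w i) (v i) = of_nat (vec.dim W) / of_nat N)"
  proof
    assume cmod_mean: "\<forall>i<N. cmod (cinner (w i) (v i)) = real (vec.dim W) / real N"
    have "(\<Sum>i<N. cinner (w i) (v i)) = of_real (real (vec.dim W))"
      by (simp add: trace_eq_dim)
    from eq_mean_if_cmod_eq_mean[OF _ this]
    have "\<forall>i\<in>{..<N}. cinner (w i) (v i) = of_real (real (vec.dim W) / real N)"
      using cmod_mean by simp
    then show "\<forall>i<N. cinner (w i) (v i) = of_nat (vec.dim W) / of_nat N"
      by simp
  qed (simp add: norm_divide)
  finally show ?thesis .
qed

abbreviation gram_pairs :: "(nat \<times> nat) set" where
  "gram_pairs \<equiv> {..<N} \<times> {..<N}"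

definition gram_sq :: "nat \<times> nat \<Rightarrow> real" where
  "gram_sq = (\<lambda>(i, j). (cmod (cinner (w i) (v j)))\<^sup>2)"

lemma gram_sq_nonneg: "0 \<le> gram_sq p"
  by (simp add: gram_sq_def split: prod.split)

lemma sum_gram_power_eq:
  "(\<Sum>i<N. \<Sum>j<N. cmod (cinner (w i) (v j)) ^ (2 * Suc m)) = (\<Sum>p\<in>gram_pairs. gram_sq p ^ Suc m)"
  unfolding sum.cartesian_product gram_sq_def
  by (intro sum.cong refl) (auto simp only: power_mult split: prod.split)

lemma dim_le_sum_gram_sq: "real (vec.dim W) \<le> (\<Sum>p\<in>gram_pairs. gram_sq p)"
  using frobenius_gram_ge_dim sum_gram_power_eq[of 0] by simp

lemma card_gram_pairs: "real (card gram_pairs) = real N ^ 2"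
  by (simp add: card_cartesian_product power2_eq_square)

lemma gram_power_sum_ge:
  "real (vec.dim W) ^ Suc m / (real N ^ 2) ^ m
     \<le> (\<Sum>i<N. \<Sum>j<N. cmod (cinner (w i) (v j)) ^ (2 * Suc m))"
  using power_sum_ge_of_sum_ge[OF _ gram_sq_nonneg _ dim_le_sum_gram_sq, of m]
  unfolding sum_gram_power_eq card_gram_pairs by simp

lemma gram_entries_eq_mean_iff:
  assumes "N \<noteq> 0"
  shows "(\<forall>i<N. \<forall>j<N. (cmod (cinner (w i) (v j)))\<^sup>2 = real (vec.dim W) / real N ^ 2)
           \<longleftrightarrow> (\<exists>c. \<forall>i<N. \<forall>j<N. cmod (cinner (w i) (v j)) = c) \<and> (\<forall>j<N. v j = canonical_dual j)"
proof
  assume sq: "\<forall>i<N. \<forall>j<N. (cmod (cinner (w i) (v j)))\<^sup>2 = real (vec.dim W) / real N ^ 2"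
  then have "\<forall>i<N. \<forall>j<N. cmod (cinner (w i) (v j)) = sqrt (real (vec.dim W) / real N ^ 2)"
    using real_sqrt_unique[OF _ norm_ge_zero] by metis
  moreover have "(\<Sum>i<N. \<Sum>j<N. (cmod (cinner (w i) (v j)))\<^sup>2) = real (vec.dim W)"
    using sq assms by (simp add: power2_eq_square)
  ultimately show "(\<exists>c. \<forall>i<N. \<forall>j<N. cmod (cinner (w i) (v j)) = c) \<and> (\<forall>j<N. v j = canonical_dual j)"
    using frobenius_gram_eq_dim_iff by blast
next
  assume "(\<exists>c. \<forall>i<N. \<forall>j<N. cmod (cinner (w i) (v j)) = c) \<and> (\<forall>j<N. v j = canonical_dual j)"
  then obtain c where c: "\<forall>i<N. \<forall>j<N. cmod (cinner (w i) (v j)) = c"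
    and "(\<Sum>i<N. \<Sum>j<N. (cmod (cinner (w i) (v j)))\<^sup>2) = real (vec.dim W)"
    using frobenius_gram_eq_dim_iff by blast
  then have "real N * real N * c\<^sup>2 = real (vec.dim W)"
    by simp
  then show "\<forall>i<N. \<forall>j<N. (cmod (cinner (w i) (v j)))\<^sup>2 = real (vec.dim W) / real N ^ 2"
    using c assms by (simp add: field_simps power2_eq_square)
qed

lemma gram_power_sum_eq_iff:
  assumes "1 \<le> m"
  shows "(\<Sum>i<N. \<Sum>j<N. cmod (cinner (w i) (v j)) ^ (2 * Suc m))
             = real (vec.dim W) ^ Suc m / (real N ^ 2) ^ m
           \<longleftrightarrow> (\<exists>c. \<forall>i<N. \<forall>j<N. cmod (cinner (w i) (v j)) = c) \<and> (\<forall>j<N. v j = canonical_dual j)"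
proof (cases "N = 0")
  case False
  have "(\<Sum>i<N. \<Sum>j<N. cmod (cinner (w i) (v j)) ^ (2 * Suc m))
             = real (vec.dim W) ^ Suc m / (real N ^ 2) ^ m
        \<longleftrightarrow> (\<forall>p\<in>gram_pairs. gram_sq p = real (vec.dim W) / real N ^ 2)"
    using power_sum_eq_of_sum_ge_iff[OF _ gram_sq_nonneg _ dim_le_sum_gram_sq assms]
    unfolding sum_gram_power_eq card_gram_pairs by simp
  also have "\<dots> \<longleftrightarrow> (\<forall>i<N. \<forall>j<N. (cmod (cinner (w i) (v j)))\<^sup>2 = real (vec.dim W) / real N ^ 2)"
    by (auto simp: gram_sq_def)
  finally show ?thesis
    using gram_entries_eq_mean_iff[OF False] by simp
qed (use assms in simp)

end

theorem corollary3p4: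
  fixes W V :: "(complex^'n) set" and w v :: "nat \<Rightarrow> complex^'n"
    and N k p :: nat
  assumes "vec.subspace W" and "vec.subspace V"
    and "direct_sum_UNIV W (corth V)"
    and "N \<ge> 1"
    and "is_frame N w W"
    and "oblique_dual_frame N w W v V"
    and "p = 2 * k" and "k \<ge> 1"
  shows "(\<Sum>i<N. cmod (cinner (w i) (v i)) ^ p)
            \<ge> real N powi (1 - int p) * real (vec.dim W) ^ p
     \<and> (\<Sum>i<N. \<Sum>j<N. cmod (cinner (w i) (v j)) ^ p)
            \<ge> real N powi (2 - int p) * real (vec.dim W) ^ k
     \<and> (k > 1 \<longrightarrow>
           ((\<Sum>i<N. cmod (cinner (w i) (v i)) ^ p)
              = real N powi (1 - int p) * real (vec.dim W) ^ p
            \<longleftrightarrow> (\<forall>i<N. cinner (w i) (v i) = of_nat (vec.dim W) / of_nat N)))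
     \<and> (k > 1 \<longrightarrow>
           ((\<Sum>i<N. \<Sum>j<N. cmod (cinner (w i) (v j)) ^ p)
              = real N powi (2 - int p) * real (vec.dim W) ^ k
            \<longleftrightarrow> ((\<exists>c. \<forall>i<N. \<forall>j<N. cmod (cinner (w i) (v j)) = c) \<and>
                 (\<forall>j<N. v j = oblique_proj V (corth W) (mp_inverse (frame_op N w) *v w j)))))"
proof -
  interpret oblique_dual_frames W V w v N
    using assms by unfold_locales
  obtain m where k: "k = Suc m"
    using \<open>k \<ge> 1\<close> by (cases k) auto
  have p: "p = Suc (2 * m + 1)" "p = 2 * Suc m"
    using \<open>p = 2 * k\<close> k by simp_all
  have exponents: "1 - int p = - int (2 * m + 1)" "2 - int p = - int (2 * m)"
    using p by simp_all
  show ?thesis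
    unfolding exponents powi_minus_mult canonical_dual_def[symmetric]
    using diagonal_power_sum_ge[of "2 * m + 1"] diagonal_power_sum_eq_iff[of "2 * m + 1"]
      gram_power_sum_ge[of m] gram_power_sum_eq_iff[of m]
    unfolding p[symmetric] k by (simp add: power_mult)
qed

end
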